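(* Let $\alpha,\beta>0$, let $c(\psi)=\sqrt{\alpha\cos^2\psi+\beta\sin^2\psi}$, let $p\ge0$ be an integer, let $C>0$ and $\theta\ge 1/2$, and let $X_{\Delta x}^p(\Omega)$ be the discontinuous piecewise polynomial space on the periodic mesh described in the context. Suppose $R,S,\psi:[0,T]\to X_{\Delta x}^p(\Omega)$ are differentiable in time and, for every $t\in[0,T]$, satisfy (with $c=c(\psi(x,t))$ inside integrals, $x$-derivatives taken cellwise, sums over $j=1,\dots,N$) $$\sum_j\int_{\Omega_j}R_t\phi\,dx+\sum_j\int_{\Omega_j}cR\phi_x\,dx-\sum_j\Big(\overline{c}_{j+1/2}\overline{R}_{j+1/2}+\tfrac12 s_{j+1/2}\llbracket R\rrbracket_{j+1/2}\Big)\phi^-_{j+1/2}+\sum_j\Big(\overline{c}_{j-1/2}\overline{R}_{j-1/2}+\tfrac12 s_{j-1/2}\llbracket R\rrbracket_{j-1/2}\Big)\phi^+_{j-1/2}=\mathcal{B}(\phi)-\sum_j\varepsilon_j\int_{\Omega_j}R_x\phi_x\,dx$$ for all $\phi\in X_{\Delta x}^p(\Omega)$, $$\sum_j\int_{\Omega_j}S_t\eta\,dx-\sum_j\int_{\Omega_j}cS\eta_x\,dx+\sum_j\Big(\overline{c}_{j+1/2}\overline{S}_{j+1/2}-\tfrac12 s_{j+1/2}\llbracket S\rrbracket_{j+1/2}\Big)\eta^-_{j+1/2}-\sum_j\Big(\overline{c}_{j-1/2}\overline{S}_{j-1/2}-\tfrac12 s_{j-1/2}\llbracket S\rrbracket_{j-1/2}\Big)\eta^+_{j-1/2}=\mathcal{B}(\eta)-\sum_j\varepsilon_j\int_{\Omega_j}S_x\eta_x\,dx$$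 for all $\eta\in X_{\Delta x}^p(\Omega)$, and $\sum_j\int_{\Omega_j}\psi_t\zeta\,dx=\sum_j\int_{\Omega_j}\frac{R+S}{2}\zeta\,dx$ for all $\zeta\in X_{\Delta x}^p(\Omega)$. Here, for a test function $\chi$, $$\mathcal{B}(\chi)=\tfrac12\sum_j\int_{\Omega_j}c(R\chi)_x\,dx-\tfrac12\sum_j\overline{c}_{j+1/2}R^-_{j+1/2}\chi^-_{j+1/2}+\tfrac12\sum_j\overline{c}_{j-1/2}R^+_{j-1/2}\chi^+_{j-1/2}-\tfrac12\sum_j\int_{\Omega_j}c(S\chi)_x\,dx+\tfrac12\sum_j\overline{c}_{j+1/2}S^-_{j+1/2}\chi^-_{j+1/2}-\tfrac12\sum_j\overline{c}_{j-1/2}S^+_{j-1/2}\chi^+_{j-1/2},$$ $s_{j+1/2}=\max\{c^-_{j+1/2},c^+_{j+1/2}\}$, and $$\varepsilon_j=\frac{\Delta x_j\,C\,\big(\int_{\Omega_j}\mathrm{Res}^2\,dx\big)^{1/2}}{\big(\int_{\Omega_j}(R_x^2+S_x^2)\,dx\big)^{1/2}+\Delta x_j^\theta},\qquad \mathrm{Res}=(R^2+S^2)_t-\big(c(\psi)(R^2-S^2)\big)_x .$$ Then $$\frac{d}{dt}\left(\sum_{j=1}^N\int_{\Omega_j}\frac{R^2+S^2}{2}\,dx\right)\le 0.$$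
   Context: The domain $\Omega$ is partitioned into cells $\Omega_j=[x_{j-1/2},x_{j+1/2}]$, $j=1,\dots,N$, with $\Delta x_j=x_{j+1/2}-x_{j-1/2}$. $X_{\Delta x}^p(\Omega)=\{u\in L^2(\Omega): u|_{\Omega_j}$ is a polynomial of degree $\le p$ for each $j\}$. For a grid function $u$, $u^+_{j+1/2}$ and $u^-_{j+1/2}$ denote its traces at $x_{j+1/2}$ from the right and left respectively; $\overline{u}_{j+1/2}=(u^+_{j+1/2}+u^-_{j+1/2})/2$ and $\llbracket u\rrbracket_{j+1/2}=u^+_{j+1/2}-u^-_{j+1/2}$. Also $c^\pm_{j+1/2}=c(\psi^\pm_{j+1/2})$ and $\overline{c}_{j+1/2}=(c^+_{j+1/2}+c^-_{j+1/2})/2$. Periodic boundary conditions: the endpoints $x_{1/2}$ and $x_{N+1/2}$ are identified, i.e. $u^-_{1/2}:=u^-_{N+1/2}$ (trace from cell $N$) and $u^+_{N+1/2}:=u^+_{1/2}$ (trace from cell $1$), for all grid functions including $\psi$ and the test functions. *)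

theory Defs
  imports "HOL-Analysis.Analysis" "HOL-Computational_Algebra.Polynomial"
begin

text \<open>Mesh: xs k = x_{k+1/2}, k = 0..N; cell j (j = 1..N) is [xs (j-1), xs j].
  A grid function u in X^p is represented by its cellwise polynomials u j, j = 1..N.\<close>

definition cspeed :: "real \<Rightarrow> real \<Rightarrow> real \<Rightarrow> real" where
  "cspeed \<alpha> \<beta> \<psi> = sqrt (\<alpha> * (cos \<psi>)^2 + \<beta> * (sin \<psi>)^2)"

definition periodic_mesh :: "nat \<Rightarrow> (nat \<Rightarrow> real) \<Rightarrow> bool" where
  "periodic_mesh N xs \<longleftrightarrow> N \<ge> 1 \<and> (\<forall>k<N. xs k < xs (Suc k))"

definition inX :: "nat \<Rightarrow> nat \<Rightarrow> (nat \<Rightarrow> real poly) \<Rightarrow> bool" where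
  "inX N p u \<longleftrightarrow> (\<forall>j\<in>{1..N}. degree (u j) \<le> p)"

definition cellint :: "(nat \<Rightarrow> real) \<Rightarrow> nat \<Rightarrow> (real \<Rightarrow> real) \<Rightarrow> real" where
  "cellint xs j f = integral {xs (j - 1)..xs j} f"

text \<open>Left trace u^-_{k+1/2} and right trace u^+_{k+1/2}, k = 0..N, with periodic identification.\<close>
definition trL :: "nat \<Rightarrow> (nat \<Rightarrow> real) \<Rightarrow> (nat \<Rightarrow> real poly) \<Rightarrow> nat \<Rightarrow> real" where
  "trL N xs u k = (if k = 0 then poly (u N) (xs N) else poly (u k) (xs k))"

definition trR :: "nat \<Rightarrow> (nat \<Rightarrow> real) \<Rightarrow> (nat \<Rightarrow> real poly) \<Rightarrow> nat \<Rightarrow> real" where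
  "trR N xs u k = (if k = N then poly (u 1) (xs 0) else poly (u (Suc k)) (xs k))"

definition avgtr :: "nat \<Rightarrow> (nat \<Rightarrow> real) \<Rightarrow> (nat \<Rightarrow> real poly) \<Rightarrow> nat \<Rightarrow> real" where
  "avgtr N xs u k = (trR N xs u k + trL N xs u k) / 2"

definition jumptr :: "nat \<Rightarrow> (nat \<Rightarrow> real) \<Rightarrow> (nat \<Rightarrow> real poly) \<Rightarrow> nat \<Rightarrow> real" where
  "jumptr N xs u k = trR N xs u k - trL N xs u k"

definition cbar :: "real \<Rightarrow> real \<Rightarrow> nat \<Rightarrow> (nat \<Rightarrow> real) \<Rightarrow> (nat \<Rightarrow> real poly) \<Rightarrow> nat \<Rightarrow> real" where
  "cbar \<alpha> \<beta> N xs \<psi> k = (cspeed \<alpha> \<beta> (trR N xs \<psi> k) + cspeed \<alpha> \<beta> (trL N xs \<psi> k)) / 2"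

definition smax :: "real \<Rightarrow> real \<Rightarrow> nat \<Rightarrow> (nat \<Rightarrow> real) \<Rightarrow> (nat \<Rightarrow> real poly) \<Rightarrow> nat \<Rightarrow> real" where
  "smax \<alpha> \<beta> N xs \<psi> k = max (cspeed \<alpha> \<beta> (trL N xs \<psi> k)) (cspeed \<alpha> \<beta> (trR N xs \<psi> k))"

definition Bform :: "real \<Rightarrow> real \<Rightarrow> nat \<Rightarrow> (nat \<Rightarrow> real) \<Rightarrow> (nat \<Rightarrow> real poly)
    \<Rightarrow> (nat \<Rightarrow> real poly) \<Rightarrow> (nat \<Rightarrow> real poly) \<Rightarrow> (nat \<Rightarrow> real poly) \<Rightarrow> real" where
  "Bform \<alpha> \<beta> N xs \<psi> R S w =
     1/2 * (\<Sum>j=1..N. cellint xs j (\<lambda>x. cspeed \<alpha> \<beta> (poly (\<psi> j) x) * poly (pderiv (R j * w j)) x))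
   - 1/2 * (\<Sum>j=1..N. cbar \<alpha> \<beta> N xs \<psi> j * trL N xs R j * trL N xs w j)
   + 1/2 * (\<Sum>j=1..N. cbar \<alpha> \<beta> N xs \<psi> (j - 1) * trR N xs R (j - 1) * trR N xs w (j - 1))
   - 1/2 * (\<Sum>j=1..N. cellint xs j (\<lambda>x. cspeed \<alpha> \<beta> (poly (\<psi> j) x) * poly (pderiv (S j * w j)) x))
   + 1/2 * (\<Sum>j=1..N. cbar \<alpha> \<beta> N xs \<psi> j * trL N xs S j * trL N xs w j)
   - 1/2 * (\<Sum>j=1..N. cbar \<alpha> \<beta> N xs \<psi> (j - 1) * trR N xs S (j - 1) * trR N xs w (j - 1))"

text \<open>Residual Res = (R^2+S^2)_t - (c(psi)(R^2-S^2))_x on cell j; Rd, Sd are the time derivatives.\<close>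
definition resid :: "real \<Rightarrow> real \<Rightarrow> (nat \<Rightarrow> real poly) \<Rightarrow> (nat \<Rightarrow> real poly) \<Rightarrow> (nat \<Rightarrow> real poly)
    \<Rightarrow> (nat \<Rightarrow> real poly) \<Rightarrow> (nat \<Rightarrow> real poly) \<Rightarrow> nat \<Rightarrow> real \<Rightarrow> real" where
  "resid \<alpha> \<beta> \<psi> R S Rd Sd j x =
     (2 * poly (R j) x * poly (Rd j) x + 2 * poly (S j) x * poly (Sd j) x)
   - deriv (\<lambda>y. cspeed \<alpha> \<beta> (poly (\<psi> j) y) * ((poly (R j) y)^2 - (poly (S j) y)^2)) x"

definition visc :: "real \<Rightarrow> real \<Rightarrow> real \<Rightarrow> real \<Rightarrow> (nat \<Rightarrow> real) \<Rightarrow> (nat \<Rightarrow> real poly)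
    \<Rightarrow> (nat \<Rightarrow> real poly) \<Rightarrow> (nat \<Rightarrow> real poly) \<Rightarrow> (nat \<Rightarrow> real poly) \<Rightarrow> (nat \<Rightarrow> real poly) \<Rightarrow> nat \<Rightarrow> real" where
  "visc \<alpha> \<beta> C \<theta> xs \<psi> R S Rd Sd j =
     (xs j - xs (j - 1)) * C * sqrt (cellint xs j (\<lambda>x. (resid \<alpha> \<beta> \<psi> R S Rd Sd j x)^2))
     / (sqrt (cellint xs j (\<lambda>x. (poly (pderiv (R j)) x)^2 + (poly (pderiv (S j)) x)^2))
        + (xs j - xs (j - 1)) powr \<theta>)"

end

theory Submission
  imports Defs
begin

text \<open>Test the R-equation with R and the S-equation with S and add them; the mass terms give
  the time derivative of the energy. In B(R) + B(S) the volume terms \<open>\<integral>c (R R)\<^sub>x\<close> and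
  \<open>\<integral>c (S S)\<^sub>x\<close> cancel the advection terms, and the two cross terms \<open>\<integral>c (R S)\<^sub>x\<close> cancel
  each other. After re-indexing the interface sums by periodicity, at every interface the
  central part (mean speed times mean trace) of the Lax--Friedrichs flux cancels against the
  interface terms of B, and its penalty \<open>\<plusminus>s\<lbrakk>u\<rbrakk>/2\<close> leaves \<open>-s (\<lbrakk>R\<rbrakk>\<^sup>2 + \<lbrakk>S\<rbrakk>\<^sup>2)/2 \<le> 0\<close>.
  The viscous terms contribute \<open>-\<Sum>\<epsilon>\<^sub>j \<integral>(R\<^sub>x\<^sup>2 + S\<^sub>x\<^sup>2) \<le> 0\<close>.\<close>

lemma poly_eq_sum_coeff_upto:
  fixes p :: "'a::comm_semiring_1 poly"
  assumes "degree p \<le> n"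
  shows "poly p x = (\<Sum>i\<le>n. coeff p i * x ^ i)"
  unfolding poly_altdef
  by (rule sum.mono_neutral_left) (use assms in \<open>auto simp: coeff_eq_0\<close>)

lemma integral_poly_mult_eq_coeff_sum:
  fixes P Q :: "real poly"
  assumes "degree P \<le> n" "degree Q \<le> n"
  shows "integral {a..b} (\<lambda>x. poly P x * poly Q x)
       = (\<Sum>i\<le>n. \<Sum>k\<le>n. coeff P i * coeff Q k * integral {a..b} (\<lambda>x. x ^ i * x ^ k))"
proof -
  have "poly P x * poly Q x = (\<Sum>i\<le>n. \<Sum>k\<le>n. coeff P i * coeff Q k * (x ^ i * x ^ k))" for x
    unfolding poly_eq_sum_coeff_upto[OF assms(1)] poly_eq_sum_coeff_upto[OF assms(2)] sum_product
    by (simp add: algebra_simps)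
  then have "integral {a..b} (\<lambda>x. poly P x * poly Q x)
      = integral {a..b} (\<lambda>x. \<Sum>i\<le>n. \<Sum>k\<le>n. coeff P i * coeff Q k * (x ^ i * x ^ k))"
    by simp
  also have "\<dots> = (\<Sum>i\<le>n. \<Sum>k\<le>n. coeff P i * coeff Q k * integral {a..b} (\<lambda>x. x ^ i * x ^ k))"
    by (simp add: integral_sum integrable_continuous_interval continuous_intros)
  finally show ?thesis .
qed

text \<open>The degree bounds on \<open>P'\<close> and \<open>Q'\<close> are not automatic: when t is isolated in U,
  the coefficient derivatives above the degree bound of \<open>P s\<close> are arbitrary.\<close>
lemma has_real_derivative_integral_poly_mult:
  fixes P Q :: "real \<Rightarrow> real poly" and P' Q' :: "real poly"
  assumes t: "t \<in> U"
    and degP: "\<And>s. s \<in> U \<Longrightarrow> degree (P s) \<le> n" and degQ: "\<And>s. s \<in> U \<Longrightarrow> degree (Q s) \<le> n"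
    and degP': "degree P' \<le> n" and degQ': "degree Q' \<le> n"
    and P': "\<And>k. ((\<lambda>s. coeff (P s) k) has_real_derivative coeff P' k) (at t within U)"
    and Q': "\<And>k. ((\<lambda>s. coeff (Q s) k) has_real_derivative coeff Q' k) (at t within U)"
  shows "((\<lambda>s. integral {a..b} (\<lambda>x. poly (P s) x * poly (Q s) x)) has_real_derivative
           integral {a..b} (\<lambda>x. poly P' x * poly (Q t) x) + integral {a..b} (\<lambda>x. poly (P t) x * poly Q' x))
         (at t within U)"
proof -
  define I where "I i k = integral {a..b} (\<lambda>x::real. x ^ i * x ^ k)" for i k
  have "((\<lambda>s. \<Sum>i\<le>n. \<Sum>k\<le>n. coeff (P s) i * coeff (Q s) k * I i k) has_real_derivative
      (\<Sum>i\<le>n. \<Sum>k\<le>n. (coeff P' i * coeff (Q t) k + coeff (P t) i * coeff Q' k) * I i k)) (at t within U)"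
    by (intro DERIV_sum derivative_eq_intros) (auto simp: algebra_simps intro: P' Q')
  also have "(\<Sum>i\<le>n. \<Sum>k\<le>n. (coeff P' i * coeff (Q t) k + coeff (P t) i * coeff Q' k) * I i k)
      = integral {a..b} (\<lambda>x. poly P' x * poly (Q t) x) + integral {a..b} (\<lambda>x. poly (P t) x * poly Q' x)"
    using degP' degQ' degP[OF t] degQ[OF t]
    by (simp add: integral_poly_mult_eq_coeff_sum I_def distrib_right sum.distrib)
  finally show ?thesis
    by (rule has_field_derivative_transform_within[where d=1])
       (use t in \<open>auto simp: integral_poly_mult_eq_coeff_sum[OF degP degQ] I_def\<close>)
qed

lemma sum_shift_periodic:
  fixes f :: "nat \<Rightarrow> 'a::comm_monoid_add"
  assumes "f 0 = f N"
  shows "(\<Sum>j=1..N. f (j - 1)) = (\<Sum>j=1..N. f j)"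
proof (cases N)
  case (Suc m)
  have "(\<Sum>j=1..N. f (j - 1)) = (\<Sum>k=0..m. f k)"
    unfolding Suc One_nat_def sum.shift_bounds_cl_Suc_ivl by simp
  also have "\<dots> = (\<Sum>j=1..N. f j)"
    using assms unfolding Suc
    by (simp add: sum.atLeast_Suc_atMost sum.atLeast_Suc_atMost_Suc_shift add.commute)
  finally show ?thesis .
qed simp

text \<open>No integrability hypothesis is needed because a non-integrable function has integral 0;
  this matters for \<open>visc\<close>, whose residual contains \<open>deriv\<close>.\<close>
lemma integral_nonneg_unconditional:
  fixes f :: "real \<Rightarrow> real"
  assumes "\<And>x. x \<in> S \<Longrightarrow> 0 \<le> f x"
  shows "0 \<le> integral S f"
  using assms integral_nonneg not_integrable_integral by (metis order_refl)

lemma trL_periodic [simp]: "trL N xs u 0 = trL N xs u N"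
  by (simp add: trL_def)

lemma trR_periodic [simp]: "trR N xs u 0 = trR N xs u N"
  by (simp add: trR_def)

lemma periodic_mesh_cell_length_pos:
  assumes "periodic_mesh N xs" and "j \<in> {1..N}"
  shows "xs (j - 1) < xs j"
  using assms unfolding periodic_mesh_def
  by (metis Suc_diff_1 atLeastAtMost_iff diff_less less_le_trans zero_less_one)

lemma cspeed_nonneg:
  assumes "0 \<le> \<alpha>" and "0 \<le> \<beta>"
  shows "0 \<le> cspeed \<alpha> \<beta> \<psi>"
  using assms by (simp add: cspeed_def)

lemma smax_nonneg:
  assumes "0 \<le> \<alpha>" and "0 \<le> \<beta>"
  shows "0 \<le> smax \<alpha> \<beta> N xs \<psi> k"
  using cspeed_nonneg[OF assms] by (simp add: smax_def le_max_iff_disj)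

lemma visc_nonneg:
  assumes "0 \<le> C" and "xs (j - 1) \<le> xs j"
  shows "0 \<le> visc \<alpha> \<beta> C \<theta> xs \<psi> R S Rd Sd j"
  using assms unfolding visc_def cellint_def
  by (intro divide_nonneg_nonneg mult_nonneg_nonneg add_nonneg_nonneg real_sqrt_ge_zero
      integral_nonneg_unconditional) auto

definition dg_inner :: "nat \<Rightarrow> (nat \<Rightarrow> real) \<Rightarrow> (nat \<Rightarrow> real poly) \<Rightarrow> (nat \<Rightarrow> real poly) \<Rightarrow> real" where
  "dg_inner N xs u v = (\<Sum>j=1..N. cellint xs j (\<lambda>x. poly (u j) x * poly (v j) x))"

lemma has_real_derivative_cellint_poly_square:
  fixes P :: "real \<Rightarrow> real poly" and P' :: "real poly"
  assumes t: "t \<in> U" and degP: "\<And>s. s \<in> U \<Longrightarrow> degree (P s) \<le> p"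
    and P': "\<And>k. ((\<lambda>s. coeff (P s) k) has_real_derivative coeff P' k) (at t within U)"
  shows "((\<lambda>s. cellint xs j (\<lambda>x. (poly (P s) x)^2)) has_real_derivative
           2 * cellint xs j (\<lambda>x. poly P' x * poly (P t) x)) (at t within U)"
proof -
  define n where "n = max p (degree P')"
  have "((\<lambda>s. cellint xs j (\<lambda>x. poly (P s) x * poly (P s) x)) has_real_derivative
      cellint xs j (\<lambda>x. poly P' x * poly (P t) x) + cellint xs j (\<lambda>x. poly (P t) x * poly P' x))
      (at t within U)"
    unfolding cellint_def
    by (rule has_real_derivative_integral_poly_mult[OF t, where n=n])
       (use degP P' in \<open>auto simp: n_def le_max_iff_disj\<close>)
  then show ?thesis
    by (simp add: power2_eq_square mult.commute[of "poly (P t) _"])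
qed

lemma dg_energy_has_derivative:
  fixes R S :: "real \<Rightarrow> nat \<Rightarrow> real poly" and Rd Sd :: "nat \<Rightarrow> real poly"
  assumes t: "t \<in> U"
    and RX: "\<And>s. s \<in> U \<Longrightarrow> inX N p (R s)" and SX: "\<And>s. s \<in> U \<Longrightarrow> inX N p (S s)"
    and Rdiff: "\<And>j k. j \<in> {1..N} \<Longrightarrow>
        ((\<lambda>s. coeff (R s j) k) has_real_derivative coeff (Rd j) k) (at t within U)"
    and Sdiff: "\<And>j k. j \<in> {1..N} \<Longrightarrow>
        ((\<lambda>s. coeff (S s j) k) has_real_derivative coeff (Sd j) k) (at t within U)"
  shows "((\<lambda>s. \<Sum>j=1..N. cellint xs j (\<lambda>x. ((poly (R s j) x)^2 + (poly (S s j) x)^2) / 2))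
           has_real_derivative dg_inner N xs Rd (R t) + dg_inner N xs Sd (S t)) (at t within U)"
proof -
  have halves: "cellint xs j (\<lambda>x. ((poly (R s j) x)^2 + (poly (S s j) x)^2) / 2)
      = (cellint xs j (\<lambda>x. (poly (R s j) x)^2) + cellint xs j (\<lambda>x. (poly (S s j) x)^2)) / 2" for s j
    unfolding cellint_def
    by (simp add: integral_add integrable_continuous_interval continuous_intros)
  have cell: "((\<lambda>s. (cellint xs j (\<lambda>x. (poly (R s j) x)^2) + cellint xs j (\<lambda>x. (poly (S s j) x)^2)) / 2)
      has_real_derivative cellint xs j (\<lambda>x. poly (Rd j) x * poly (R t j) x)
          + cellint xs j (\<lambda>x. poly (Sd j) x * poly (S t j) x)) (at t within U)"
    if j: "j \<in> {1..N}" for j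
  proof -
    have dR: "((\<lambda>s. cellint xs j (\<lambda>x. (poly (R s j) x)^2)) has_real_derivative
        2 * cellint xs j (\<lambda>x. poly (Rd j) x * poly (R t j) x)) (at t within U)"
      by (rule has_real_derivative_cellint_poly_square[OF t, where p=p])
         (use RX Rdiff j in \<open>auto simp: inX_def\<close>)
    have dS: "((\<lambda>s. cellint xs j (\<lambda>x. (poly (S s j) x)^2)) has_real_derivative
        2 * cellint xs j (\<lambda>x. poly (Sd j) x * poly (S t j) x)) (at t within U)"
      by (rule has_real_derivative_cellint_poly_square[OF t, where p=p])
         (use SX Sdiff j in \<open>auto simp: inX_def\<close>)
    from DERIV_cdivide[OF DERIV_add[OF dR dS], where c=2] show ?thesis
      by (simp add: add_divide_distrib)
  qed
  have "((\<lambda>s. \<Sum>j=1..N. cellint xs j (\<lambda>x. ((poly (R s j) x)^2 + (poly (S s j) x)^2) / 2))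
      has_real_derivative (\<Sum>j=1..N. cellint xs j (\<lambda>x. poly (Rd j) x * poly (R t j) x)
          + cellint xs j (\<lambda>x. poly (Sd j) x * poly (S t j) x))) (at t within U)"
    unfolding halves by (rule DERIV_sum) (rule cell)
  then show ?thesis
    by (simp add: dg_inner_def sum.distrib)
qed

definition advection_form :: "real \<Rightarrow> real \<Rightarrow> nat \<Rightarrow> (nat \<Rightarrow> real) \<Rightarrow> (nat \<Rightarrow> real poly)
    \<Rightarrow> (nat \<Rightarrow> real poly) \<Rightarrow> (nat \<Rightarrow> real poly) \<Rightarrow> real" where
  "advection_form \<alpha> \<beta> N xs \<psi> u \<phi> =
     (\<Sum>j=1..N. cellint xs j (\<lambda>x. cspeed \<alpha> \<beta> (poly (\<psi> j) x) * poly (u j) x * poly (pderiv (\<phi> j)) x))"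

lemma cellint_pderiv_square:
  "cellint xs j (\<lambda>x. c x * poly (pderiv (u * u)) x) = 2 * cellint xs j (\<lambda>x. c x * poly u x * poly (pderiv u) x)"
proof -
  have "(\<lambda>x. c x * poly (pderiv (u * u)) x) = (\<lambda>x. 2 * (c x * poly u x * poly (pderiv u) x))"
    by (simp add: pderiv_mult algebra_simps)
  then show ?thesis
    by (simp add: cellint_def)
qed

lemma Bform_energy:
  "Bform \<alpha> \<beta> N xs \<psi> R S R + Bform \<alpha> \<beta> N xs \<psi> R S S
   = advection_form \<alpha> \<beta> N xs \<psi> R R - advection_form \<alpha> \<beta> N xs \<psi> S S
   + 1/2 * (\<Sum>j=1..N. cbar \<alpha> \<beta> N xs \<psi> j *
       (((trR N xs R j)^2 - (trL N xs R j)^2) - ((trR N xs S j)^2 - (trL N xs S j)^2)))"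
proof -
  have shift: "(\<Sum>j=1..N. cbar \<alpha> \<beta> N xs \<psi> (j - 1) * trR N xs u (j - 1) * trR N xs v (j - 1))
      = (\<Sum>j=1..N. cbar \<alpha> \<beta> N xs \<psi> j * trR N xs u j * trR N xs v j)" for u v
    by (rule sum_shift_periodic) (simp add: cbar_def)
  show ?thesis
    unfolding Bform_def shift cellint_pderiv_square advection_form_def
    by (simp add: algebra_simps sum.distrib sum_subtractf sum_distrib_left power2_eq_square sum_distrib_right)
qed

definition interface_form :: "nat \<Rightarrow> (nat \<Rightarrow> real) \<Rightarrow> (nat \<Rightarrow> real) \<Rightarrow> (nat \<Rightarrow> real poly) \<Rightarrow> real" where
  "interface_form N xs F \<phi> =
     (\<Sum>j=1..N. F j * trL N xs \<phi> j) - (\<Sum>j=1..N. F (j - 1) * trR N xs \<phi> (j - 1))"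

lemma interface_form_periodic:
  assumes "F 0 = F N"
  shows "interface_form N xs F \<phi> = (\<Sum>j=1..N. F j * (trL N xs \<phi> j - trR N xs \<phi> j))"
proof -
  have "(\<Sum>j=1..N. F (j - 1) * trR N xs \<phi> (j - 1)) = (\<Sum>j=1..N. F j * trR N xs \<phi> j)"
    by (rule sum_shift_periodic) (simp add: assms)
  then show ?thesis
    by (simp add: interface_form_def right_diff_distrib sum_subtractf)
qed

definition lf_flux_plus :: "real \<Rightarrow> real \<Rightarrow> nat \<Rightarrow> (nat \<Rightarrow> real) \<Rightarrow> (nat \<Rightarrow> real poly)
    \<Rightarrow> (nat \<Rightarrow> real poly) \<Rightarrow> nat \<Rightarrow> real" where
  "lf_flux_plus \<alpha> \<beta> N xs \<psi> u k =
     cbar \<alpha> \<beta> N xs \<psi> k * avgtr N xs u k + 1/2 * smax \<alpha> \<beta> N xs \<psi> k * jumptr N xs u k"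

definition lf_flux_minus :: "real \<Rightarrow> real \<Rightarrow> nat \<Rightarrow> (nat \<Rightarrow> real) \<Rightarrow> (nat \<Rightarrow> real poly)
    \<Rightarrow> (nat \<Rightarrow> real poly) \<Rightarrow> nat \<Rightarrow> real" where
  "lf_flux_minus \<alpha> \<beta> N xs \<psi> u k =
     cbar \<alpha> \<beta> N xs \<psi> k * avgtr N xs u k - 1/2 * smax \<alpha> \<beta> N xs \<psi> k * jumptr N xs u k"

definition viscous_form :: "nat \<Rightarrow> (nat \<Rightarrow> real) \<Rightarrow> (nat \<Rightarrow> real) \<Rightarrow> (nat \<Rightarrow> real poly) \<Rightarrow> (nat \<Rightarrow> real poly) \<Rightarrow> real" where
  "viscous_form N xs \<epsilon> u \<phi> =
     (\<Sum>j=1..N. \<epsilon> j * cellint xs j (\<lambda>x. poly (pderiv (u j)) x * poly (pderiv (\<phi> j)) x))"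

lemma lf_flux_dissipation:
  fixes c s uL uR vL vR :: real
  shows "(c * ((uR + uL) / 2) + 1/2 * s * (uR - uL)) * (uL - uR)
       - (c * ((vR + vL) / 2) - 1/2 * s * (vR - vL)) * (vL - vR)
       + 1/2 * (c * ((uR^2 - uL^2) - (vR^2 - vL^2)))
       = - (s / 2 * ((uR - uL)^2 + (vR - vL)^2))"
  by (simp add: power2_eq_square field_simps)

lemma dg_energy_identity:
  assumes eqR: "dg_inner N xs Rd R + advection_form \<alpha> \<beta> N xs \<psi> R R
      - interface_form N xs (lf_flux_plus \<alpha> \<beta> N xs \<psi> R) R
      = Bform \<alpha> \<beta> N xs \<psi> R S R - viscous_form N xs \<epsilon> R R"
    and eqS: "dg_inner N xs Sd S - advection_form \<alpha> \<beta> N xs \<psi> S S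
      + interface_form N xs (lf_flux_minus \<alpha> \<beta> N xs \<psi> S) S
      = Bform \<alpha> \<beta> N xs \<psi> R S S - viscous_form N xs \<epsilon> S S"
  shows "dg_inner N xs Rd R + dg_inner N xs Sd S
       = - (\<Sum>j=1..N. smax \<alpha> \<beta> N xs \<psi> j / 2 * ((jumptr N xs R j)^2 + (jumptr N xs S j)^2))
         - viscous_form N xs \<epsilon> R R - viscous_form N xs \<epsilon> S S"
proof -
  have fluxR: "interface_form N xs (lf_flux_plus \<alpha> \<beta> N xs \<psi> R) R
      = (\<Sum>j=1..N. lf_flux_plus \<alpha> \<beta> N xs \<psi> R j * (trL N xs R j - trR N xs R j))"
    by (rule interface_form_periodic) (simp add: lf_flux_plus_def cbar_def smax_def avgtr_def jumptr_def)
  have fluxS: "interface_form N xs (lf_flux_minus \<alpha> \<beta> N xs \<psi> S) S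
      = (\<Sum>j=1..N. lf_flux_minus \<alpha> \<beta> N xs \<psi> S j * (trL N xs S j - trR N xs S j))"
    by (rule interface_form_periodic) (simp add: lf_flux_minus_def cbar_def smax_def avgtr_def jumptr_def)
  have "interface_form N xs (lf_flux_plus \<alpha> \<beta> N xs \<psi> R) R
      - interface_form N xs (lf_flux_minus \<alpha> \<beta> N xs \<psi> S) S
      + 1/2 * (\<Sum>j=1..N. cbar \<alpha> \<beta> N xs \<psi> j *
          (((trR N xs R j)^2 - (trL N xs R j)^2) - ((trR N xs S j)^2 - (trL N xs S j)^2)))
      = - (\<Sum>j=1..N. smax \<alpha> \<beta> N xs \<psi> j / 2 * ((jumptr N xs R j)^2 + (jumptr N xs S j)^2))"
    unfolding fluxR fluxS sum_distrib_left
      sum_subtractf[symmetric] sum.distrib[symmetric] sum_negf[symmetric]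
    by (intro sum.cong refl)
       (unfold lf_flux_plus_def lf_flux_minus_def avgtr_def jumptr_def, rule lf_flux_dissipation)
  then show ?thesis
    using eqR eqS Bform_energy[of \<alpha> \<beta> N xs \<psi> R S] by linarith
qed

lemma viscous_form_self_nonneg:
  assumes "\<And>j. j \<in> {1..N} \<Longrightarrow> 0 \<le> \<epsilon> j"
  shows "0 \<le> viscous_form N xs \<epsilon> u u"
proof -
  have "0 \<le> cellint xs j (\<lambda>x. poly (pderiv (u j)) x * poly (pderiv (u j)) x)" for j
    unfolding cellint_def by (rule integral_nonneg_unconditional) simp
  then show ?thesis
    unfolding viscous_form_def using assms by (intro sum_nonneg mult_nonneg_nonneg) auto
qed

lemma dg_energy_rate_nonpos:
  assumes eqR: "dg_inner N xs Rd R + advection_form \<alpha> \<beta> N xs \<psi> R R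
      - interface_form N xs (lf_flux_plus \<alpha> \<beta> N xs \<psi> R) R
      = Bform \<alpha> \<beta> N xs \<psi> R S R - viscous_form N xs \<epsilon> R R"
    and eqS: "dg_inner N xs Sd S - advection_form \<alpha> \<beta> N xs \<psi> S S
      + interface_form N xs (lf_flux_minus \<alpha> \<beta> N xs \<psi> S) S
      = Bform \<alpha> \<beta> N xs \<psi> R S S - viscous_form N xs \<epsilon> S S"
    and "0 \<le> \<alpha>" and "0 \<le> \<beta>" and \<epsilon>_nonneg: "\<And>j. j \<in> {1..N} \<Longrightarrow> 0 \<le> \<epsilon> j"
  shows "dg_inner N xs Rd R + dg_inner N xs Sd S \<le> 0"
proof -
  have jumps: "0 \<le> (\<Sum>j=1..N. smax \<alpha> \<beta> N xs \<psi> j / 2 * ((jumptr N xs R j)^2 + (jumptr N xs S j)^2))"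
    by (intro sum_nonneg mult_nonneg_nonneg divide_nonneg_nonneg smax_nonneg) (use assms in auto)
  have viscous: "0 \<le> viscous_form N xs \<epsilon> u u" for u
    by (rule viscous_form_self_nonneg) (rule \<epsilon>_nonneg)
  show ?thesis
    using dg_energy_identity[OF eqR eqS] jumps viscous[of R] viscous[of S] by linarith
qed

theorem proposition2p2:
  fixes \<alpha> \<beta> C \<theta> T :: real and p N :: nat and xs :: "nat \<Rightarrow> real"
    and R S \<psi> Rd Sd \<psi>d :: "real \<Rightarrow> nat \<Rightarrow> real poly"
  assumes "\<alpha> > 0" and "\<beta> > 0" and "C > 0" and "\<theta> \<ge> 1/2"
    and mesh: "periodic_mesh N xs"
    and RX: "\<And>t. t \<in> {0..T} \<Longrightarrow> inX N p (R t)"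
    and SX: "\<And>t. t \<in> {0..T} \<Longrightarrow> inX N p (S t)"
    and psiX: "\<And>t. t \<in> {0..T} \<Longrightarrow> inX N p (\<psi> t)"
    and Rdiff: "\<And>t j k. t \<in> {0..T} \<Longrightarrow> j \<in> {1..N} \<Longrightarrow>
        ((\<lambda>s. coeff (R s j) k) has_real_derivative coeff (Rd t j) k) (at t within {0..T})"
    and Sdiff: "\<And>t j k. t \<in> {0..T} \<Longrightarrow> j \<in> {1..N} \<Longrightarrow>
        ((\<lambda>s. coeff (S s j) k) has_real_derivative coeff (Sd t j) k) (at t within {0..T})"
    and psidiff: "\<And>t j k. t \<in> {0..T} \<Longrightarrow> j \<in> {1..N} \<Longrightarrow>
        ((\<lambda>s. coeff (\<psi> s j) k) has_real_derivative coeff (\<psi>d t j) k) (at t within {0..T})"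
    and eqR: "\<And>t \<phi>. t \<in> {0..T} \<Longrightarrow> inX N p \<phi> \<Longrightarrow>
        (\<Sum>j=1..N. cellint xs j (\<lambda>x. poly (Rd t j) x * poly (\<phi> j) x))
      + (\<Sum>j=1..N. cellint xs j (\<lambda>x. cspeed \<alpha> \<beta> (poly (\<psi> t j) x) * poly (R t j) x * poly (pderiv (\<phi> j)) x))
      - (\<Sum>j=1..N. (cbar \<alpha> \<beta> N xs (\<psi> t) j * avgtr N xs (R t) j
                    + 1/2 * smax \<alpha> \<beta> N xs (\<psi> t) j * jumptr N xs (R t) j) * trL N xs \<phi> j)
      + (\<Sum>j=1..N. (cbar \<alpha> \<beta> N xs (\<psi> t) (j - 1) * avgtr N xs (R t) (j - 1)
                    + 1/2 * smax \<alpha> \<beta> N xs (\<psi> t) (j - 1) * jumptr N xs (R t) (j - 1)) * trR N xs \<phi> (j - 1))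
      = Bform \<alpha> \<beta> N xs (\<psi> t) (R t) (S t) \<phi>
      - (\<Sum>j=1..N. visc \<alpha> \<beta> C \<theta> xs (\<psi> t) (R t) (S t) (Rd t) (Sd t) j
           * cellint xs j (\<lambda>x. poly (pderiv (R t j)) x * poly (pderiv (\<phi> j)) x))"
    and eqS: "\<And>t \<eta>. t \<in> {0..T} \<Longrightarrow> inX N p \<eta> \<Longrightarrow>
        (\<Sum>j=1..N. cellint xs j (\<lambda>x. poly (Sd t j) x * poly (\<eta> j) x))
      - (\<Sum>j=1..N. cellint xs j (\<lambda>x. cspeed \<alpha> \<beta> (poly (\<psi> t j) x) * poly (S t j) x * poly (pderiv (\<eta> j)) x))
      + (\<Sum>j=1..N. (cbar \<alpha> \<beta> N xs (\<psi> t) j * avgtr N xs (S t) j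
                    - 1/2 * smax \<alpha> \<beta> N xs (\<psi> t) j * jumptr N xs (S t) j) * trL N xs \<eta> j)
      - (\<Sum>j=1..N. (cbar \<alpha> \<beta> N xs (\<psi> t) (j - 1) * avgtr N xs (S t) (j - 1)
                    - 1/2 * smax \<alpha> \<beta> N xs (\<psi> t) (j - 1) * jumptr N xs (S t) (j - 1)) * trR N xs \<eta> (j - 1))
      = Bform \<alpha> \<beta> N xs (\<psi> t) (R t) (S t) \<eta>
      - (\<Sum>j=1..N. visc \<alpha> \<beta> C \<theta> xs (\<psi> t) (R t) (S t) (Rd t) (Sd t) j
           * cellint xs j (\<lambda>x. poly (pderiv (S t j)) x * poly (pderiv (\<eta> j)) x))"
    and eqpsi: "\<And>t \<zeta>. t \<in> {0..T} \<Longrightarrow> inX N p \<zeta> \<Longrightarrow>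
        (\<Sum>j=1..N. cellint xs j (\<lambda>x. poly (\<psi>d t j) x * poly (\<zeta> j) x))
      = (\<Sum>j=1..N. cellint xs j (\<lambda>x. (poly (R t j) x + poly (S t j) x) / 2 * poly (\<zeta> j) x))"
  shows "\<forall>t\<in>{0..T}. \<exists>D.
     ((\<lambda>s. \<Sum>j=1..N. cellint xs j (\<lambda>x. ((poly (R s j) x)^2 + (poly (S s j) x)^2) / 2))
        has_real_derivative D) (at t within {0..T}) \<and> D \<le> 0"
proof
  fix t assume t: "t \<in> {0..T}"
  let ?E = "\<lambda>s. \<Sum>j=1..N. cellint xs j (\<lambda>x. ((poly (R s j) x)^2 + (poly (S s j) x)^2) / 2)"
  let ?\<epsilon> = "visc \<alpha> \<beta> C \<theta> xs (\<psi> t) (R t) (S t) (Rd t) (Sd t)"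
  have "dg_inner N xs (Rd t) (R t) + advection_form \<alpha> \<beta> N xs (\<psi> t) (R t) (R t)
      - interface_form N xs (lf_flux_plus \<alpha> \<beta> N xs (\<psi> t) (R t)) (R t)
      = Bform \<alpha> \<beta> N xs (\<psi> t) (R t) (S t) (R t) - viscous_form N xs ?\<epsilon> (R t) (R t)"
    using eqR[OF t RX[OF t]]
    unfolding dg_inner_def advection_form_def interface_form_def lf_flux_plus_def viscous_form_def
    by linarith
  moreover have "dg_inner N xs (Sd t) (S t) - advection_form \<alpha> \<beta> N xs (\<psi> t) (S t) (S t)
      + interface_form N xs (lf_flux_minus \<alpha> \<beta> N xs (\<psi> t) (S t)) (S t)
      = Bform \<alpha> \<beta> N xs (\<psi> t) (R t) (S t) (S t) - viscous_form N xs ?\<epsilon> (S t) (S t)"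
    using eqS[OF t SX[OF t]]
    unfolding dg_inner_def advection_form_def interface_form_def lf_flux_minus_def viscous_form_def
    by linarith
  moreover have "0 \<le> ?\<epsilon> j" if "j \<in> {1..N}" for j
    using visc_nonneg \<open>C > 0\<close> periodic_mesh_cell_length_pos[OF mesh that] by (simp add: less_imp_le)
  ultimately have "dg_inner N xs (Rd t) (R t) + dg_inner N xs (Sd t) (S t) \<le> 0"
    using \<open>\<alpha> > 0\<close> \<open>\<beta> > 0\<close> by (intro dg_energy_rate_nonpos) auto
  moreover have "(?E has_real_derivative dg_inner N xs (Rd t) (R t) + dg_inner N xs (Sd t) (S t)) (at t within {0..T})"
    by (rule dg_energy_has_derivative[OF t RX SX Rdiff Sdiff]) (use t in auto)
  ultimately show "\<exists>D. (?E has_real_derivative D) (at t within {0..T}) \<and> D \<le> 0"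
    by blast
qed

end
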